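(* Let $c>0$, $\gamma>0$, $T>0$, and let $\{\xi_{tT}\}_{0\le t\le T}$ be a stable-1/2 random bridge with activity parameter $c$ whose terminal law has density $f_{GIG}(z;-\tfrac12,cT,\gamma)$. Then for $0\le s<t<T$, $$\mathbb{Q}[\xi_{tT}\in dy\mid \xi_{sT}=x]=q_{t-s}(y-x)\,dy,$$ i.e. $\{\xi_{tT}\}$ is an inverse-Gaussian process (a Lévy process whose increments over intervals of length $u$ have density $q_u$).
   Context: Let $f_t(x)=\mathbf 1_{\{x>0\}}\frac{ct}{\sqrt{2\pi}x^{3/2}}\exp\left(-\frac{c^2t^2}{2x}\right)$ be the density of $S_t$ for a stable-1/2 subordinator $\{S_t\}$ with activity parameter $c>0$ (a Lévy process with $\mathbb{E}[e^{-\lambda S_t}]=\exp(-ct\sqrt{\lambda}/\sqrt2)$). A process $\{\xi_{tT}\}_{0\le t\le T}$ is a stable-1/2 random bridge with terminal law $\nu$ if $\xi_{TT}$ has law $\nu$ and, for $\nu$-a.e. $z$, conditionally on $\xi_{TT}=z$ its finite-dimensional distributions on $(0,T)$ coincide with those of $\{S_t\}$ conditioned on $S_T=z$. The generalized inverse-Gaussian density is $f_{GIG}(x;\lambda,\delta,\gamma)=\mathbf 1_{\{x>0\}}(\gamma/\delta)^{\lambda}\frac{1}{2K_\lambda(\gamma\delta)}x^{\lambda-1}\exp\left(-\tfrac12(\delta^2x^{-1}+\gamma^2x)\right)$, with $K_\lambda$ the modified Bessel function of the third kind. The inverse-Gaussian density is $q_t(x)=\mathbf 1_{\{x>0\}}\frac{ct}{\sqrt{2\pi}}x^{-3/2}\exp\left(-\frac{\gamma^2}{2x}\left(x-\frac{c}{\gamma}t\right)^2\right)=f_{GIG}(x;-\tfrac12,ct,\gamma)$.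 *)

theory Defs
  imports "HOL-Probability.Probability"
begin

definition stable_half_dens :: "real \<Rightarrow> real \<Rightarrow> real \<Rightarrow> real" where
  "stable_half_dens c t x =
     (if x > 0 then c * t / (sqrt (2 * pi) * x powr (3/2)) * exp (- (c\<^sup>2 * t\<^sup>2) / (2 * x))
      else 0)"

definition besselK :: "real \<Rightarrow> real \<Rightarrow> real" where
  "besselK lam x = (LBINT u:{0<..}. exp (- x * cosh u) * cosh (lam * u))"

definition f_GIG :: "real \<Rightarrow> real \<Rightarrow> real \<Rightarrow> real \<Rightarrow> real" where
  "f_GIG x lam \<delta> \<gamma> =
     (if x > 0 then (\<gamma> / \<delta>) powr lam * (1 / (2 * besselK lam (\<gamma> * \<delta>)))
        * x powr (lam - 1) * exp (- (1/2) * (\<delta>\<^sup>2 / x + \<gamma>\<^sup>2 * x))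
      else 0)"

definition IG_dens :: "real \<Rightarrow> real \<Rightarrow> real \<Rightarrow> real \<Rightarrow> real" where
  "IG_dens c \<gamma> t x =
     (if x > 0 then c * t / sqrt (2 * pi) * x powr (-3/2)
        * exp (- (\<gamma>\<^sup>2 / (2 * x)) * (x - c / \<gamma> * t)\<^sup>2)
      else 0)"

(* Joint density of (S_{t_0},...,S_{t_{n-1}}, S_T) under the Levy bridge of the stable-1/2
   subordinator pinned at S_T = z, mixed over the terminal density p:
   prod_{i<=n} f_{tt_i - tt_{i-1}}(x_i - x_{i-1}) / f_T(x_n) * p(x_n),
   where tt_i = t_i (i<n), tt_n = T, tt_{-1} = 0, x_{-1} = 0. *)
definition bridge_joint_dens ::
  "real \<Rightarrow> real \<Rightarrow> (real \<Rightarrow> real) \<Rightarrow> nat \<Rightarrow> (nat \<Rightarrow> real) \<Rightarrow> (nat \<Rightarrow> real) \<Rightarrow> real" where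
  "bridge_joint_dens c T p n t x =
     (let tt = (\<lambda>i. if i < n then t i else T);
          tp = (\<lambda>i. if i = 0 then 0 else t (i - 1));
          xp = (\<lambda>i. if i = 0 then 0 else x (i - 1))
      in (\<Prod>i\<le>n. stable_half_dens c (tt i - tp i) (x i - xp i))
           / stable_half_dens c T (x n) * p (x n))"

(* For n = 0 this says
   xi_T has law p(z) dz. *)
definition stable_half_random_bridge ::
  "'a measure \<Rightarrow> real \<Rightarrow> real \<Rightarrow> (real \<Rightarrow> real) \<Rightarrow> (real \<Rightarrow> 'a \<Rightarrow> real) \<Rightarrow> bool" where
  "stable_half_random_bridge M c T p \<xi> \<longleftrightarrow>
     prob_space M \<and>
     (\<forall>t\<in>{0..T}. \<xi> t \<in> borel_measurable M) \<and>
     (AE \<omega> in M. \<xi> 0 \<omega> = 0) \<and>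
     (\<forall>n::nat. \<forall>t::nat \<Rightarrow> real.
        (\<forall>i<n. 0 < t i \<and> t i < T) \<and> (\<forall>i j. i < j \<and> j < n \<longrightarrow> t i < t j) \<longrightarrow>
        distr M (PiM {..n} (\<lambda>_. lborel)) (\<lambda>\<omega>. \<lambda>i\<in>{..n}. if i < n then \<xi> (t i) \<omega> else \<xi> T \<omega>)
          = density (PiM {..n} (\<lambda>_. lborel)) (\<lambda>x. ennreal (bridge_joint_dens c T p n t x)))"

end

theory Submission
  imports Defs
begin

text \<open>The inverse-Gaussian density is the exponential tilt
  \<open>q\<^sub>u(y) = f\<^sub>u(y) exp(c\<gamma>u - \<gamma>\<^sup>2y/2)\<close> of the stable-1/2 density, and the tilt is additive in
  \<open>(u, y)\<close>. Hence in the finite-dimensional densities of the bridge, a product of stable-1/2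
  transition densities divided by \<open>f\<^sub>T(x\<^sub>n)\<close> and multiplied by the terminal density
  \<open>f\<^sub>G\<^sub>I\<^sub>G(x\<^sub>n; -1/2, cT, \<gamma>)\<close>, a constant multiple of \<open>q\<^sub>T(x\<^sub>n)\<close>, the tilts telescope and what remains is the
  product of the inverse-Gaussian transition densities of the increments. So
  \<open>(\<xi>\<^sub>s, \<xi>\<^sub>t, \<xi>\<^sub>T)\<close> has density \<open>q\<^sub>s(a) q\<^sub>t\<^sub>-\<^sub>s(b - a) q\<^sub>T\<^sub>-\<^sub>t(z - b)\<close>, and integrating out
  \<open>z\<close> with \<open>\<integral> q = 1\<close> exhibits \<open>q\<^sub>t\<^sub>-\<^sub>s(\<cdot> - \<xi>\<^sub>s)\<close> as the conditional law of \<open>\<xi>\<^sub>t\<close>.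
  That \<open>q\<^sub>u\<close> has mass 1 follows from the substitution \<open>x \<mapsto> b\<surd>x - a/\<surd>x\<close> onto the
  Gaussian together with the inversion \<open>x \<mapsto> (a/b)\<^sup>2/x\<close>.\<close>

section \<open>The inverse-Gaussian density\<close>

lemma powr_three_halves: "(x::real) > 0 \<Longrightarrow> x powr (3/2) = x * sqrt x"
  using powr_add[of x 1 "1/2"] by (simp add: powr_half_sqrt)

lemma powr_minus_three_halves: "(x::real) > 0 \<Longrightarrow> x powr - (3/2) = 1 / (x * sqrt x)"
  using powr_minus_divide[of x "3/2"] powr_three_halves[of x] by simp

lemma integral_halfline_inversion:
  fixes f :: "real \<Rightarrow> real" and m :: real
  assumes "m > 0" and "f absolutely_integrable_on {0<..}"
  shows "(\<lambda>x. m\<^sup>2 / x\<^sup>2 * f (m\<^sup>2 / x)) absolutely_integrable_on {0<..}"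
    and "integral {0<..} (\<lambda>x. m\<^sup>2 / x\<^sup>2 * f (m\<^sup>2 / x)) = integral {0<..} f"
proof -
  have deriv: "((\<lambda>x. m\<^sup>2 / x) has_field_derivative - (m\<^sup>2 / x\<^sup>2)) (at x within {0<..})"
    if "x \<in> {0<..}" for x
    using that by (auto intro!: derivative_eq_intros simp: field_simps power2_eq_square)
  have "inj_on (\<lambda>x. m\<^sup>2 / x) {0::real<..}"
    using assms(1) by (auto simp: inj_on_def field_simps)
  moreover have "(\<lambda>x. m\<^sup>2 / x) ` {0::real<..} = {0<..}"
  proof (intro set_eqI iffI)
    fix y :: real assume "y \<in> {0<..}"
    then show "y \<in> (\<lambda>x. m\<^sup>2 / x) ` {0<..}"
      using assms(1) by (intro image_eqI[of _ _ "m\<^sup>2 / y"]) auto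
  qed (use assms(1) in auto)
  ultimately have "(\<lambda>x. \<bar>- (m\<^sup>2 / x\<^sup>2)\<bar> * f (m\<^sup>2 / x)) absolutely_integrable_on {0<..} \<and>
      integral {0<..} (\<lambda>x. \<bar>- (m\<^sup>2 / x\<^sup>2)\<bar> * f (m\<^sup>2 / x)) = integral {0<..} f"
    using has_absolute_integral_change_of_variables_1'[OF _ deriv] assms(2) by simp
  then show "(\<lambda>x. m\<^sup>2 / x\<^sup>2 * f (m\<^sup>2 / x)) absolutely_integrable_on {0<..}"
    and "integral {0<..} (\<lambda>x. m\<^sup>2 / x\<^sup>2 * f (m\<^sup>2 / x)) = integral {0<..} f"
    by simp_all
qed

lemma bij_betw_sqrt_difference:
  fixes a b :: real
  assumes "a > 0" and "b > 0"
  shows "bij_betw (\<lambda>x. b * sqrt x - a / sqrt x) {0<..} UNIV"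
proof (rule bij_betw_imageI)
  have mono: "b * sqrt x - a / sqrt x < b * sqrt y - a / sqrt y" if "0 < x" "x < y" for x y
  proof -
    have "sqrt x < sqrt y" "0 < sqrt x" using that by auto
    then have "b * sqrt x < b * sqrt y" "a / sqrt y < a / sqrt x"
      using assms by (auto simp: divide_strict_left_mono)
    then show ?thesis by simp
  qed
  show "inj_on (\<lambda>x. b * sqrt x - a / sqrt x) {0<..}"
  proof (rule linorder_inj_onI')
    fix x y :: real assume "x \<in> {0<..}" "x < y"
    then show "b * sqrt x - a / sqrt x \<noteq> b * sqrt y - a / sqrt y"
      using mono[of x y] by simp
  qed
  show "(\<lambda>x. b * sqrt x - a / sqrt x) ` {0<..} = UNIV"
  proof (intro set_eqI iffI)
    fix y :: real
    define D where "D = sqrt (y\<^sup>2 + 4 * a * b)"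
    define z where "z = (y + D) / (2 * b)"
    \<comment> \<open>the positive root of \<open>b z\<^sup>2 - y z - a = 0\<close>\<close>
    have D2: "D\<^sup>2 = y\<^sup>2 + 4 * a * b" using assms by (simp add: D_def)
    have "\<bar>y\<bar> < D"
      using assms real_sqrt_less_mono[of "y\<^sup>2" "y\<^sup>2 + 4 * a * b"] by (simp add: D_def)
    then have z: "z > 0" using assms by (simp add: z_def)
    have "4 * b * (b * z * z - y * z - a) = D\<^sup>2 - y\<^sup>2 - 4 * a * b"
      using assms unfolding z_def by (simp add: field_simps power2_eq_square)
    then have "b * z * z - y * z - a = 0" using D2 assms by simp
    then have "b * z - a / z = y" using z by (simp add: field_simps)
    with z show "y \<in> (\<lambda>x. b * sqrt x - a / sqrt x) ` {0<..}"
      by (intro image_eqI[of _ _ "z\<^sup>2"]) auto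
  qed auto
qed

lemma integral_std_normal_sqrt_substitution:
  fixes a b :: real
  assumes "a > 0" and "b > 0"
  defines "g \<equiv> \<lambda>x. (b / (2 * sqrt x) + a / (2 * x * sqrt x))
                   * std_normal_density (b * sqrt x - a / sqrt x)"
  shows "g absolutely_integrable_on {0<..}" and "integral {0<..} g = 1"
proof -
  have deriv: "((\<lambda>x. b * sqrt x - a / sqrt x) has_field_derivative
      b / (2 * sqrt x) + a / (2 * x * sqrt x)) (at x within {0<..})" if "x \<in> {0<..}" for x
    using that by (auto intro!: derivative_eq_intros simp: field_simps)
  have "integrable lborel std_normal_density" by simp
  then have "std_normal_density absolutely_integrable_on (\<lambda>x. b * sqrt x - a / sqrt x) ` {0<..}
      \<and> integral ((\<lambda>x. b * sqrt x - a / sqrt x) ` {0<..}) std_normal_density = 1"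
    using bij_betw_imp_surj_on[OF bij_betw_sqrt_difference[OF assms(1,2)]]
    by (simp add: absolutely_integrable_on_def integrable_on_lborel integral_lborel)
  then have cv: "(\<lambda>x. \<bar>b / (2 * sqrt x) + a / (2 * x * sqrt x)\<bar>
        * std_normal_density (b * sqrt x - a / sqrt x)) absolutely_integrable_on {0<..}
      \<and> integral {0<..} (\<lambda>x. \<bar>b / (2 * sqrt x) + a / (2 * x * sqrt x)\<bar>
        * std_normal_density (b * sqrt x - a / sqrt x)) = 1"
    using has_absolute_integral_change_of_variables_1'[OF _ deriv
        bij_betw_imp_inj_on[OF bij_betw_sqrt_difference[OF assms(1,2)]]]
    by simp
  have eq: "g x = \<bar>b / (2 * sqrt x) + a / (2 * x * sqrt x)\<bar>
      * std_normal_density (b * sqrt x - a / sqrt x)" if "x \<in> {0<..} - {}" for x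
    using that assms by (simp add: g_def)
  show "g absolutely_integrable_on {0<..}"
    by (rule absolutely_integrable_spike[OF conjunct1[OF cv] negligible_empty eq])
  show "integral {0<..} g = 1"
    using integral_cong[of "{0<..}" g] eq cv by simp
qed

lemma absolutely_integrable_on_add_nonneg_summands:
  fixes f g :: "real \<Rightarrow> real"
  assumes "S \<in> sets lebesgue" and "continuous_on S f" and "continuous_on S g"
    and "\<And>x. x \<in> S \<Longrightarrow> 0 \<le> f x" and "\<And>x. x \<in> S \<Longrightarrow> 0 \<le> g x"
    and "(\<lambda>x. f x + g x) absolutely_integrable_on S"
  shows "f absolutely_integrable_on S" and "g absolutely_integrable_on S"
  using assms
  by (auto intro!: measurable_bounded_by_integrable_imp_absolutely_integrable
        [OF continuous_imp_measurable_on_sets_lebesgue, of _ _ "\<lambda>x. f x + g x"]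
      dest: set_lebesgue_integral_eq_integral(1))

lemma inverse_gaussian_eq_std_normal_density:
  fixes a b x :: real
  assumes "x > 0"
  shows "a / sqrt (2 * pi) * x powr (-3/2) * exp (- (a - b * x)\<^sup>2 / (2 * x))
    = a / (x * sqrt x) * std_normal_density (b * sqrt x - a / sqrt x)"
proof -
  have "- (b * sqrt x - a / sqrt x)\<^sup>2 / 2 = - (a - b * x)\<^sup>2 / (2 * x)"
    using assms by (simp add: field_simps power2_eq_square)
  then show ?thesis
    unfolding std_normal_density_def by (simp add: powr_minus_three_halves[OF assms] ac_simps)
qed

lemma has_integral_inverse_gaussian:
  fixes a b :: real
  assumes a: "a > 0" and b: "b > 0"
  shows "((\<lambda>x. a / sqrt (2 * pi) * x powr (-3/2) * exp (- (a - b * x)\<^sup>2 / (2 * x)))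
           has_integral 1) {0<..}"
proof -
  define \<phi> where "\<phi> x = b * sqrt x - a / sqrt x" for x
  define n where "n x = std_normal_density (\<phi> x)" for x
  define h1 where "h1 x = b / (2 * sqrt x) * n x" for x
  define h2 where "h2 x = a / (2 * x * sqrt x) * n x" for x
  have "(\<lambda>x. (b / (2 * sqrt x) + a / (2 * x * sqrt x)) * std_normal_density (\<phi> x))
      = (\<lambda>x. h1 x + h2 x)"
    by (simp add: h1_def h2_def n_def fun_eq_iff algebra_simps)
  then have sum: "(\<lambda>x. h1 x + h2 x) absolutely_integrable_on {0<..}"
      "integral {0<..} (\<lambda>x. h1 x + h2 x) = 1"
    using integral_std_normal_sqrt_substitution[OF a b] unfolding \<phi>_def[symmetric] by auto
  have "continuous_on {0<..} n"
    by (auto simp: n_def \<phi>_def std_normal_density_def intro!: continuous_intros)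
  then have "continuous_on {0<..} h1" "continuous_on {0<..} h2"
    unfolding h1_def h2_def by (auto intro!: continuous_intros)
  moreover have "0 \<le> n x" for x
    by (simp add: n_def)
  then have "0 \<le> h1 x" "0 \<le> h2 x" if "x \<in> {0<..}" for x
    using that a b by (auto simp: h1_def h2_def intro!: divide_nonneg_nonneg mult_nonneg_nonneg)
  ultimately have h1_int: "h1 absolutely_integrable_on {0<..}"
    and h2_int: "h2 absolutely_integrable_on {0<..}"
    using absolutely_integrable_on_add_nonneg_summands[of "{0<..}" h1 h2] sum(1) by auto
  \<comment> \<open>\<open>x \<mapsto> (a/b)\<^sup>2/x\<close> fixes the standard normal density of \<open>\<phi>\<close> and exchanges the two summands\<close>
  have swap: "(a / b)\<^sup>2 / x\<^sup>2 * h1 ((a / b)\<^sup>2 / x) = h2 x" if "x \<in> {0<..}" for x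
  proof -
    have x: "x > 0" using that by simp
    have sqrt_inv: "sqrt ((a / b)\<^sup>2 / x) = a / (b * sqrt x)"
      using a b x by (simp add: real_sqrt_divide)
    have "\<phi> ((a / b)\<^sup>2 / x) = - \<phi> x"
      unfolding \<phi>_def sqrt_inv using a b x by (simp add: field_simps)
    then show ?thesis
      unfolding h1_def h2_def n_def sqrt_inv using a b x
      by (simp add: std_normal_density_def field_simps power2_eq_square)
  qed
  have "integral {0<..} h2 = integral {0<..} (\<lambda>x. (a / b)\<^sup>2 / x\<^sup>2 * h1 ((a / b)\<^sup>2 / x))"
    using swap by (intro integral_cong) simp
  also have "\<dots> = integral {0<..} h1"
    using integral_halfline_inversion(2) h1_int a b by simp
  finally have "integral {0<..} h2 = integral {0<..} h1" .
  moreover have "integral {0<..} h1 + integral {0<..} h2 = 1"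
    using sum(2) integral_add h1_int h2_int by (metis set_lebesgue_integral_eq_integral(1))
  ultimately have "((\<lambda>x. 2 * h2 x) has_integral 1) {0<..}"
    using has_integral_mult_right[OF integrable_integral, of h2 "{0<..}" 2] h2_int
    by (auto dest: set_lebesgue_integral_eq_integral(1))
  moreover have "2 * h2 x = a / sqrt (2 * pi) * x powr (-3/2) * exp (- (a - b * x)\<^sup>2 / (2 * x))"
    if "x \<in> {0<..}" for x
    using that inverse_gaussian_eq_std_normal_density[of x a b] by (simp add: h2_def n_def \<phi>_def)
  ultimately show ?thesis
    using has_integral_cong by (metis (no_types, lifting))
qed

lemma IG_dens_measurable [measurable]: "IG_dens c \<gamma> u \<in> borel_measurable borel"
  unfolding IG_dens_def[abs_def] by measurable

lemma IG_dens_nonneg: "0 \<le> c \<Longrightarrow> 0 \<le> u \<Longrightarrow> 0 \<le> IG_dens c \<gamma> u y"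
  by (simp add: IG_dens_def)

lemma nn_integral_IG_dens:
  assumes "c > 0" and "\<gamma> > 0" and "u > 0"
  shows "(\<integral>\<^sup>+y. ennreal (IG_dens c \<gamma> u (y - x)) \<partial>lborel) = 1"
proof -
  have "ennreal (IG_dens c \<gamma> u y) = ennreal (c * u / sqrt (2 * pi) * y powr (-3/2)
      * exp (- (c * u - \<gamma> * y)\<^sup>2 / (2 * y))) * indicator {0<..} y" for y
  proof (cases "y > 0")
    case True
    then have "- (\<gamma>\<^sup>2 / (2 * y)) * (y - c / \<gamma> * u)\<^sup>2 = - (c * u - \<gamma> * y)\<^sup>2 / (2 * y)"
      using assms by (simp add: field_simps power2_eq_square)
    then show ?thesis using True by (simp add: IG_dens_def)
  qed (simp add: IG_dens_def)
  then have "(\<integral>\<^sup>+y. ennreal (IG_dens c \<gamma> u y) \<partial>lborel) = 1"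
    using nn_integral_has_integral_lebesgue'[OF _ has_integral_inverse_gaussian[of "c * u" \<gamma>]] assms
    by simp
  then show ?thesis
    using nn_integral_real_affine[of "\<lambda>y. ennreal (IG_dens c \<gamma> u y)" 1 "- x"] by simp
qed

lemma IG_dens_eq_exp_tilt:
  assumes "\<gamma> > 0"
  shows "IG_dens c \<gamma> u y = stable_half_dens c u y * exp (c * \<gamma> * u - \<gamma>\<^sup>2 * y / 2)"
proof (cases "y > 0")
  case True
  have "- (\<gamma>\<^sup>2 / (2 * y)) * (y - c / \<gamma> * u)\<^sup>2 = - (c\<^sup>2 * u\<^sup>2) / (2 * y) + (c * \<gamma> * u - \<gamma>\<^sup>2 * y / 2)"
    using True assms by (simp add: field_simps power2_eq_square)
  then have "exp (- (\<gamma>\<^sup>2 / (2 * y)) * (y - c / \<gamma> * u)\<^sup>2)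
      = exp (- (c\<^sup>2 * u\<^sup>2) / (2 * y)) * exp (c * \<gamma> * u - \<gamma>\<^sup>2 * y / 2)"
    by (simp only: exp_add)
  then show ?thesis
    unfolding IG_dens_def stable_half_dens_def
    using True by (simp add: powr_minus_three_halves powr_three_halves)
qed (simp add: IG_dens_def stable_half_dens_def)

section \<open>Finite-dimensional densities of the bridge\<close>

definition GIG_IG_ratio :: "real \<Rightarrow> real \<Rightarrow> real \<Rightarrow> real" where
  "GIG_IG_ratio c \<gamma> T = (\<gamma> / (c * T)) powr (-1/2) * sqrt (2 * pi) * exp (- (\<gamma> * (c * T)))
     / (2 * besselK (-1/2) (\<gamma> * (c * T)) * (c * T))"

lemma f_GIG_minus_half_eq_IG_dens:
  assumes "c > 0" and "\<gamma> > 0" and "T > 0"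
  shows "f_GIG z (-1/2) (c * T) \<gamma> = GIG_IG_ratio c \<gamma> T * IG_dens c \<gamma> T z"
proof (cases "z > 0")
  case True
  have "- (1/2) * ((c * T)\<^sup>2 / z + \<gamma>\<^sup>2 * z)
      = - (\<gamma> * (c * T)) + (- (\<gamma>\<^sup>2 / (2 * z)) * (z - c / \<gamma> * T)\<^sup>2)"
    using True assms by (simp add: field_simps power2_eq_square)
  then have "exp (- (1/2) * ((c * T)\<^sup>2 / z + \<gamma>\<^sup>2 * z))
      = exp (- (\<gamma> * (c * T))) * exp (- (\<gamma>\<^sup>2 / (2 * z)) * (z - c / \<gamma> * T)\<^sup>2)"
    by (simp only: exp_add)
  moreover have "z powr (-1/2 - 1) = z powr (-3/2)" by simp
  ultimately show ?thesis
    unfolding f_GIG_def IG_dens_def GIG_IG_ratio_def using True assms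
    by (simp add: field_simps)
qed (simp add: f_GIG_def IG_dens_def)

definition increment :: "(nat \<Rightarrow> real) \<Rightarrow> nat \<Rightarrow> real" where
  "increment x i = x i - (if i = 0 then 0 else x (i - 1))"

lemma sum_increment: "(\<Sum>i\<le>n. increment x i) = x n"
  by (induction n) (simp_all add: increment_def)

lemma prod_stable_half_dens_tilt:
  fixes n :: nat and u y :: "nat \<Rightarrow> real"
  assumes "c > 0" and "\<gamma> > 0" and "(\<Sum>i\<le>n. u i) > 0"
  shows "(\<Prod>i\<le>n. stable_half_dens c (u i) (y i))
           / stable_half_dens c (\<Sum>i\<le>n. u i) (\<Sum>i\<le>n. y i) * IG_dens c \<gamma> (\<Sum>i\<le>n. u i) (\<Sum>i\<le>n. y i)
         = (\<Prod>i\<le>n. IG_dens c \<gamma> (u i) (y i))"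
proof (cases "(\<Sum>i\<le>n. y i) > 0")
  case True
  define E where "E u y = exp (c * \<gamma> * u - \<gamma>\<^sup>2 * y / 2)" for u y
  have "c * \<gamma> * (\<Sum>i\<le>n. u i) - \<gamma>\<^sup>2 * (\<Sum>i\<le>n. y i) / 2 = (\<Sum>i\<le>n. c * \<gamma> * u i - \<gamma>\<^sup>2 * y i / 2)"
    by (simp add: sum_subtractf sum_distrib_left sum_divide_distrib)
  then have "(\<Prod>i\<le>n. E (u i) (y i)) = E (\<Sum>i\<le>n. u i) (\<Sum>i\<le>n. y i)"
    unfolding E_def by (simp only: exp_sum[OF finite_atMost])
  moreover have "stable_half_dens c (\<Sum>i\<le>n. u i) (\<Sum>i\<le>n. y i) > 0"
    using assms True by (simp add: stable_half_dens_def)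
  ultimately show ?thesis
    by (simp add: IG_dens_eq_exp_tilt[OF assms(2)] E_def[symmetric] prod.distrib)
next
  case False
  then have "\<not> (\<forall>i\<le>n. y i > 0)"
    using sum_pos[of "{..n}" y] by auto
  then obtain i where "i \<le> n" "y i \<le> 0"
    by (auto simp: not_less)
  then have "(\<Prod>i\<le>n. stable_half_dens c (u i) (y i)) = 0" and "(\<Prod>i\<le>n. IG_dens c \<gamma> (u i) (y i)) = 0"
    by (auto simp: IG_dens_def stable_half_dens_def prod_zero_iff intro!: bexI[of _ i])
  then show ?thesis by (simp only: mult_zero_left div_0)
qed

lemma bridge_joint_dens_GIG:
  assumes "c > 0" and "\<gamma> > 0" and "T > 0"
  shows "bridge_joint_dens c T (\<lambda>z. f_GIG z (-1/2) (c * T) \<gamma>) n t x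
    = GIG_IG_ratio c \<gamma> T * (\<Prod>i\<le>n. IG_dens c \<gamma> (increment (\<lambda>i. if i < n then t i else T) i) (increment x i))"
proof -
  define u where "u = increment (\<lambda>i. if i < n then t i else T)"
  have u_sum: "(\<Sum>i\<le>n. u i) = T"
    by (simp add: u_def sum_increment)
  have "(\<Prod>i\<le>n. stable_half_dens c ((if i < n then t i else T) - (if i = 0 then 0 else t (i - 1)))
          (x i - (if i = 0 then 0 else x (i - 1))))
      = (\<Prod>i\<le>n. stable_half_dens c (u i) (increment x i))"
    by (rule prod.cong) (auto simp: u_def increment_def)
  then have "bridge_joint_dens c T (\<lambda>z. f_GIG z (-1/2) (c * T) \<gamma>) n t x
      = GIG_IG_ratio c \<gamma> T * ((\<Prod>i\<le>n. stable_half_dens c (u i) (increment x i))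
          / stable_half_dens c (\<Sum>i\<le>n. u i) (\<Sum>i\<le>n. increment x i)
          * IG_dens c \<gamma> (\<Sum>i\<le>n. u i) (\<Sum>i\<le>n. increment x i))"
    unfolding bridge_joint_dens_def Let_def f_GIG_minus_half_eq_IG_dens[OF assms]
    by (simp add: u_sum sum_increment)
  also have "\<dots> = GIG_IG_ratio c \<gamma> T * (\<Prod>i\<le>n. IG_dens c \<gamma> (u i) (increment x i))"
    by (subst prod_stable_half_dens_tilt[OF assms(1,2)]) (simp_all add: u_sum assms(3))
  finally show ?thesis unfolding u_def .
qed

section \<open>Two-step densities on product space\<close>

lemma nn_integral_PiM_pair:
  fixes F :: "real \<Rightarrow> real \<Rightarrow> ennreal" and i j :: 'i
  assumes "i \<noteq> j" and [measurable]: "case_prod F \<in> borel_measurable (borel \<Otimes>\<^sub>M borel)"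
  shows "(\<integral>\<^sup>+x. F (x i) (x j) \<partial>PiM {i, j} (\<lambda>_. lborel)) = (\<integral>\<^sup>+a. \<integral>\<^sup>+b. F a b \<partial>lborel \<partial>lborel)"
proof -
  interpret product_sigma_finite "\<lambda>_::'i. lborel :: real measure"
    by (simp add: product_sigma_finite_def lborel.sigma_finite_measure_axioms)
  have "(\<lambda>x. F (x i) (x j)) \<in> borel_measurable (PiM (insert i {j}) (\<lambda>_. lborel))"
    by measurable
  then have "(\<integral>\<^sup>+x. F (x i) (x j) \<partial>PiM {i, j} (\<lambda>_. lborel))
      = (\<integral>\<^sup>+a. \<integral>\<^sup>+x. F a (x j) \<partial>PiM {j} (\<lambda>_. lborel) \<partial>lborel)"
    using product_nn_integral_insert_rev[of "{j}" i] assms(1) by simp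
  also have "\<dots> = (\<integral>\<^sup>+a. \<integral>\<^sup>+b. F a b \<partial>lborel \<partial>lborel)"
    by (intro nn_integral_cong product_nn_integral_singleton) measurable
  finally show ?thesis .
qed

lemma nn_integral_PiM_triple:
  fixes F :: "real \<Rightarrow> real \<Rightarrow> real \<Rightarrow> ennreal"
  assumes [measurable]: "(\<lambda>(a, b, c). F a b c) \<in> borel_measurable (borel \<Otimes>\<^sub>M borel \<Otimes>\<^sub>M borel)"
  shows "(\<integral>\<^sup>+x. F (x 0) (x 1) (x 2) \<partial>PiM {..2::nat} (\<lambda>_. lborel))
    = (\<integral>\<^sup>+a. \<integral>\<^sup>+b. \<integral>\<^sup>+c. F a b c \<partial>lborel \<partial>lborel \<partial>lborel)"
proof -
  interpret product_sigma_finite "\<lambda>_::nat. lborel :: real measure"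
    by (simp add: product_sigma_finite_def lborel.sigma_finite_measure_axioms)
  have "{..2::nat} = insert 0 {1, 2}" by auto
  moreover have "(\<lambda>x. F (x 0) (x 1) (x 2)) \<in> borel_measurable (PiM (insert 0 {1::nat, 2}) (\<lambda>_. lborel))"
  proof -
    have "(\<lambda>x. (x 0, x 1, x 2)) \<in> PiM (insert 0 {1::nat, 2}) (\<lambda>_. lborel) \<rightarrow>\<^sub>M borel \<Otimes>\<^sub>M borel \<Otimes>\<^sub>M borel"
      by measurable
    from measurable_compose[OF this assms] show ?thesis by simp
  qed
  ultimately have "(\<integral>\<^sup>+x. F (x 0) (x 1) (x 2) \<partial>PiM {..2::nat} (\<lambda>_. lborel))
      = (\<integral>\<^sup>+a. \<integral>\<^sup>+x. F a (x 1) (x 2) \<partial>PiM {1::nat, 2} (\<lambda>_. lborel) \<partial>lborel)"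
    using product_nn_integral_insert_rev[of "{1, 2}" 0] by simp
  also have "\<dots> = (\<integral>\<^sup>+a. \<integral>\<^sup>+b. \<integral>\<^sup>+c. F a b c \<partial>lborel \<partial>lborel \<partial>lborel)"
    by (intro nn_integral_cong nn_integral_PiM_pair) measurable
  finally show ?thesis .
qed

lemma emeasure_one_step_density:
  fixes X :: "'a \<Rightarrow> nat \<Rightarrow> real" and g :: "real \<Rightarrow> ennreal" and h :: "real \<Rightarrow> real \<Rightarrow> ennreal"
  assumes X [measurable]: "X \<in> M \<rightarrow>\<^sub>M PiM {..1} (\<lambda>_. lborel)"
    and distr_X: "distr M (PiM {..1} (\<lambda>_. lborel)) X
      = density (PiM {..1} (\<lambda>_. lborel)) (\<lambda>x. g (x 0) * h (x 0) (x 1))"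
    and [measurable]: "g \<in> borel_measurable borel" "case_prod h \<in> borel_measurable (borel \<Otimes>\<^sub>M borel)"
    and h_prob: "\<And>a. (\<integral>\<^sup>+b. h a b \<partial>lborel) = 1"
    and [measurable]: "B \<in> sets borel"
  shows "emeasure M {\<omega>\<in>space M. X \<omega> 0 \<in> B} = (\<integral>\<^sup>+a. g a * indicator B a \<partial>lborel)"
proof -
  let ?P = "PiM {..1::nat} (\<lambda>_. lborel :: real measure)"
  have atMost_1_eq_pair: "{..1::nat} = {0, 1}" by auto
  have S [measurable]: "{x\<in>space ?P. x 0 \<in> B} \<in> sets ?P" by measurable
  have "{\<omega>\<in>space M. X \<omega> 0 \<in> B} = X -` {x\<in>space ?P. x 0 \<in> B} \<inter> space M"
    using measurable_space[OF X] by auto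
  then have "emeasure M {\<omega>\<in>space M. X \<omega> 0 \<in> B} = emeasure (distr M ?P X) {x\<in>space ?P. x 0 \<in> B}"
    by (simp only: emeasure_distr[OF X S])
  also have "\<dots> = (\<integral>\<^sup>+x. g (x 0) * indicator B (x 0) * h (x 0) (x 1) \<partial>?P)"
    unfolding distr_X by (subst emeasure_density) (auto intro!: nn_integral_cong simp: indicator_def)
  also have "\<dots> = (\<integral>\<^sup>+a. \<integral>\<^sup>+b. g a * indicator B a * h a b \<partial>lborel \<partial>lborel)"
    unfolding atMost_1_eq_pair by (rule nn_integral_PiM_pair) (simp, measurable)
  also have "\<dots> = (\<integral>\<^sup>+a. g a * indicator B a \<partial>lborel)"
    by (simp add: nn_integral_cmult h_prob)
  finally show ?thesis .
qed

context
  fixes M :: "'a measure" and X :: "'a \<Rightarrow> nat \<Rightarrow> real"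
    and g :: "real \<Rightarrow> ennreal" and k h :: "real \<Rightarrow> real \<Rightarrow> ennreal"
  assumes X [measurable]: "X \<in> M \<rightarrow>\<^sub>M PiM {..2} (\<lambda>_. lborel)"
    and distr_X: "distr M (PiM {..2} (\<lambda>_. lborel)) X
      = density (PiM {..2} (\<lambda>_. lborel)) (\<lambda>x. g (x 0) * k (x 0) (x 1) * h (x 1) (x 2))"
    and [measurable]: "g \<in> borel_measurable borel"
      "case_prod k \<in> borel_measurable (borel \<Otimes>\<^sub>M borel)"
      "case_prod h \<in> borel_measurable (borel \<Otimes>\<^sub>M borel)"
    and h_prob: "\<And>b. (\<integral>\<^sup>+z. h b z \<partial>lborel) = 1"
begin

lemma nn_integral_two_step_density:
  assumes [measurable]: "case_prod F \<in> borel_measurable (borel \<Otimes>\<^sub>M borel)"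
  shows "(\<integral>\<^sup>+\<omega>. F (X \<omega> 0) (X \<omega> 1) \<partial>M) = (\<integral>\<^sup>+a. \<integral>\<^sup>+b. g a * k a b * F a b \<partial>lborel \<partial>lborel)"
proof -
  let ?P = "PiM {..2::nat} (\<lambda>_. lborel :: real measure)"
  have "(\<integral>\<^sup>+\<omega>. F (X \<omega> 0) (X \<omega> 1) \<partial>M) = (\<integral>\<^sup>+x. F (x 0) (x 1) \<partial>distr M ?P X)"
    by (rule nn_integral_distr[symmetric]) measurable
  also have "\<dots> = (\<integral>\<^sup>+x. g (x 0) * k (x 0) (x 1) * F (x 0) (x 1) * h (x 1) (x 2) \<partial>?P)"
    unfolding distr_X by (subst nn_integral_density) (auto intro!: nn_integral_cong simp: mult_ac)
  also have "\<dots> = (\<integral>\<^sup>+a. \<integral>\<^sup>+b. \<integral>\<^sup>+z. g a * k a b * F a b * h b z \<partial>lborel \<partial>lborel \<partial>lborel)"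
    by (rule nn_integral_PiM_triple[where F = "\<lambda>a b z. g a * k a b * F a b * h b z"]) measurable
  also have "\<dots> = (\<integral>\<^sup>+a. \<integral>\<^sup>+b. g a * k a b * F a b \<partial>lborel \<partial>lborel)"
    by (simp add: nn_integral_cmult h_prob)
  finally show ?thesis .
qed

lemma emeasure_two_step_density:
  assumes k_prob: "\<And>a. (\<integral>\<^sup>+b. k a b \<partial>lborel) = 1"
    and [measurable]: "A \<in> sets borel" "B \<in> sets borel"
  shows "emeasure M {\<omega>\<in>space M. X \<omega> 0 \<in> A \<and> X \<omega> 1 \<in> B}
    = (\<integral>\<^sup>+\<omega>. indicator A (X \<omega> 0) * (\<integral>\<^sup>+y. indicator B y * k (X \<omega> 0) y \<partial>lborel) \<partial>M)"
proof -
  define H where "H a = (\<integral>\<^sup>+y. indicator B y * k a y \<partial>lborel)" for a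
  have [measurable]: "H \<in> borel_measurable borel"
    unfolding H_def by measurable
  have [measurable]: "(\<lambda>\<omega>. X \<omega> i) \<in> borel_measurable M" if "i \<le> 2" for i
    using that by (intro measurable_compose[OF X]) measurable
  let ?S = "{\<omega>\<in>space M. X \<omega> 0 \<in> A \<and> X \<omega> 1 \<in> B}"
  have "?S \<in> sets M"
    by measurable
  then have "emeasure M ?S = (\<integral>\<^sup>+\<omega>. indicator ?S \<omega> \<partial>M)"
    by (rule nn_integral_indicator[symmetric])
  also have "\<dots> = (\<integral>\<^sup>+\<omega>. indicator A (X \<omega> 0) * indicator B (X \<omega> 1) \<partial>M)"
    by (rule nn_integral_cong) (auto simp: indicator_def)
  also have "\<dots> = (\<integral>\<^sup>+a. \<integral>\<^sup>+b. g a * k a b * (indicator A a * indicator B b) \<partial>lborel \<partial>lborel)"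
    by (rule nn_integral_two_step_density) measurable
  also have "\<dots> = (\<integral>\<^sup>+a. (g a * indicator A a) * H a \<partial>lborel)"
    unfolding H_def by (subst nn_integral_cmult[symmetric]) (auto intro!: nn_integral_cong simp: mult_ac)
  also have "\<dots> = (\<integral>\<^sup>+a. (g a * indicator A a * H a) * (\<integral>\<^sup>+b. k a b \<partial>lborel) \<partial>lborel)"
    by (simp add: k_prob)
  also have "\<dots> = (\<integral>\<^sup>+a. \<integral>\<^sup>+b. g a * k a b * (indicator A a * H a) \<partial>lborel \<partial>lborel)"
    by (subst nn_integral_cmult[symmetric]) (auto intro!: nn_integral_cong simp: mult_ac)
  also have "\<dots> = (\<integral>\<^sup>+\<omega>. indicator A (X \<omega> 0) * H (X \<omega> 0) \<partial>M)"
    by (rule nn_integral_two_step_density[symmetric]) measurable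
  finally show ?thesis unfolding H_def .
qed

end

lemma stable_half_random_bridge_GIG_distr:
  assumes "c > 0" and "\<gamma> > 0" and "T > 0"
    and bridge: "stable_half_random_bridge M c T (\<lambda>z. f_GIG z (-1/2) (c * T) \<gamma>) \<xi>"
    and "\<forall>i<n. 0 < t i \<and> t i < T" and "\<forall>i j. i < j \<and> j < n \<longrightarrow> t i < t j"
  shows "distr M (PiM {..n} (\<lambda>_. lborel)) (\<lambda>\<omega>. \<lambda>i\<in>{..n}. if i < n then \<xi> (t i) \<omega> else \<xi> T \<omega>)
    = density (PiM {..n} (\<lambda>_. lborel)) (\<lambda>x. ennreal (GIG_IG_ratio c \<gamma> T
        * (\<Prod>i\<le>n. IG_dens c \<gamma> (increment (\<lambda>i. if i < n then t i else T) i) (increment x i))))"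
  using bridge assms(5,6)
  unfolding stable_half_random_bridge_def bridge_joint_dens_GIG[OF assms(1-3)] by blast

lemma stable_half_random_bridge_measurable:
  assumes "stable_half_random_bridge M c T p \<xi>" and "t \<in> {0..T}"
  shows "\<xi> t \<in> borel_measurable M"
  using assms unfolding stable_half_random_bridge_def by blast

text \<open>Instead of evaluating the Bessel function \<open>K\<^sub>-\<^sub>1\<^sub>/\<^sub>2\<close>, the constant is pinned down by the
  total mass of the two-point law at times \<open>T/2\<close> and \<open>T\<close>.\<close>
lemma GIG_IG_ratio_eq_1:
  assumes c: "c > 0" and \<gamma>: "\<gamma> > 0" and T: "T > 0"
    and bridge: "stable_half_random_bridge M c T (\<lambda>z. f_GIG z (-1/2) (c * T) \<gamma>) \<xi>"
  shows "GIG_IG_ratio c \<gamma> T = 1"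
proof -
  define K where "K = GIG_IG_ratio c \<gamma> T"
  define X where "X = (\<lambda>\<omega>. \<lambda>i\<in>{..1::nat}. if i < 1 then \<xi> (T / 2) \<omega> else \<xi> T \<omega>)"
  interpret prob_space M
    using bridge by (simp add: stable_half_random_bridge_def)
  have [measurable]: "\<xi> (T / 2) \<in> borel_measurable M" "\<xi> T \<in> borel_measurable M"
    using stable_half_random_bridge_measurable[OF bridge] T by simp_all
  have X: "X \<in> M \<rightarrow>\<^sub>M PiM {..1} (\<lambda>_. lborel)"
    unfolding X_def by measurable
  have "distr M (PiM {..1} (\<lambda>_. lborel)) X = density (PiM {..1} (\<lambda>_. lborel))
      (\<lambda>x. ennreal (K * IG_dens c \<gamma> (T / 2) (x 0)) * ennreal (IG_dens c \<gamma> (T / 2) (x 1 - x 0)))"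
  proof -
    have "ennreal (K * (IG_dens c \<gamma> (T / 2) a * IG_dens c \<gamma> (T / 2) b))
        = ennreal (K * IG_dens c \<gamma> (T / 2) a) * ennreal (IG_dens c \<gamma> (T / 2) b)" for a b
      using c T by (simp add: ennreal_mult'' IG_dens_nonneg mult.assoc[symmetric])
    then show ?thesis
      using stable_half_random_bridge_GIG_distr[OF c \<gamma> T bridge, of 1 "\<lambda>_. T / 2"] T
      by (simp add: X_def K_def increment_def)
  qed
  from emeasure_one_step_density[OF X this, of UNIV]
  have mass: "(\<integral>\<^sup>+a. ennreal (K * IG_dens c \<gamma> (T / 2) a) \<partial>lborel) = 1"
    using nn_integral_IG_dens[OF c \<gamma>] T by (simp add: emeasure_space_1)
  have "K > 0"
  proof (rule ccontr)
    assume "\<not> K > 0"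
    then have "ennreal (K * IG_dens c \<gamma> (T / 2) a) = 0" for a
      using mult_nonpos_nonneg[of K "IG_dens c \<gamma> (T / 2) a"] IG_dens_nonneg[of c "T / 2" \<gamma> a] c T
      by (simp add: ennreal_eq_0_iff)
    with mass show False by simp
  qed
  then have "(\<integral>\<^sup>+a. ennreal (K * IG_dens c \<gamma> (T / 2) a) \<partial>lborel)
      = (\<integral>\<^sup>+a. ennreal K * ennreal (IG_dens c \<gamma> (T / 2) a) \<partial>lborel)"
    using c T by (intro nn_integral_cong ennreal_mult) (auto intro: IG_dens_nonneg)
  also have "\<dots> = ennreal K"
    using nn_integral_IG_dens[OF c \<gamma>, of "T / 2" 0] T by (simp add: nn_integral_cmult)
  finally show ?thesis
    using mass by (simp add: K_def)
qed

lemma emeasure_GIG_bridge_two_times: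
  assumes c: "c > 0" and \<gamma>: "\<gamma> > 0"
    and bridge: "stable_half_random_bridge M c T (\<lambda>z. f_GIG z (-1/2) (c * T) \<gamma>) \<xi>"
    and st: "0 < s" "s < t" "t < T" and [measurable]: "A \<in> sets borel" "B \<in> sets borel"
  shows "emeasure M {\<omega>\<in>space M. \<xi> s \<omega> \<in> A \<and> \<xi> t \<omega> \<in> B}
    = (\<integral>\<^sup>+\<omega>. indicator A (\<xi> s \<omega>)
        * (\<integral>\<^sup>+y. indicator B y * ennreal (IG_dens c \<gamma> (t - s) (y - \<xi> s \<omega>)) \<partial>lborel) \<partial>M)"
proof -
  have T: "T > 0" using st by simp
  define X where "X = (\<lambda>\<omega>. \<lambda>i\<in>{..2::nat}. if i < 2 then \<xi> (if i = 0 then s else t) \<omega> else \<xi> T \<omega>)"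
  have [measurable]: "\<xi> s \<in> borel_measurable M" "\<xi> t \<in> borel_measurable M" "\<xi> T \<in> borel_measurable M"
    using stable_half_random_bridge_measurable[OF bridge] st by simp_all
  have X: "X \<in> M \<rightarrow>\<^sub>M PiM {..2} (\<lambda>_. lborel)"
    unfolding X_def
  proof (rule measurable_restrict)
    fix i :: nat
    show "(\<lambda>\<omega>. if i < 2 then \<xi> (if i = 0 then s else t) \<omega> else \<xi> T \<omega>) \<in> M \<rightarrow>\<^sub>M lborel"
      by (cases "i < 2"; cases "i = 0") simp_all
  qed
  have "distr M (PiM {..2} (\<lambda>_. lborel)) X = density (PiM {..2} (\<lambda>_. lborel))
      (\<lambda>x. ennreal (IG_dens c \<gamma> s (x 0)) * ennreal (IG_dens c \<gamma> (t - s) (x 1 - x 0))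
        * ennreal (IG_dens c \<gamma> (T - t) (x 2 - x 1)))"
    using stable_half_random_bridge_GIG_distr[OF c \<gamma> T bridge, of 2 "\<lambda>i. if i = 0 then s else t"]
      GIG_IG_ratio_eq_1[OF c \<gamma> T bridge] st c
    by (simp add: X_def increment_def numeral_2_eq_2 ennreal_mult'' IG_dens_nonneg)
  from emeasure_two_step_density[where g = "\<lambda>a. ennreal (IG_dens c \<gamma> s a)"
      and k = "\<lambda>a b. ennreal (IG_dens c \<gamma> (t - s) (b - a))"
      and h = "\<lambda>b z. ennreal (IG_dens c \<gamma> (T - t) (z - b))", OF X this]
  show ?thesis
    using nn_integral_IG_dens[OF c \<gamma>] st by (simp add: X_def)
qed

lemma emeasure_GIG_bridge_from_origin:
  assumes c: "c > 0" and \<gamma>: "\<gamma> > 0"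
    and bridge: "stable_half_random_bridge M c T (\<lambda>z. f_GIG z (-1/2) (c * T) \<gamma>) \<xi>"
    and t: "0 < t" "t < T" and [measurable]: "A \<in> sets borel" "B \<in> sets borel"
  shows "emeasure M {\<omega>\<in>space M. \<xi> 0 \<omega> \<in> A \<and> \<xi> t \<omega> \<in> B}
    = (\<integral>\<^sup>+\<omega>. indicator A (\<xi> 0 \<omega>)
        * (\<integral>\<^sup>+y. indicator B y * ennreal (IG_dens c \<gamma> t (y - \<xi> 0 \<omega>)) \<partial>lborel) \<partial>M)"
proof -
  have T: "T > 0" using t by simp
  interpret prob_space M
    using bridge by (simp add: stable_half_random_bridge_def)
  have origin: "AE \<omega> in M. \<xi> 0 \<omega> = 0"
    using bridge by (simp add: stable_half_random_bridge_def)
  have [measurable]: "\<xi> 0 \<in> borel_measurable M" "\<xi> t \<in> borel_measurable M" "\<xi> T \<in> borel_measurable M"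
    using stable_half_random_bridge_measurable[OF bridge] t by simp_all
  define X where "X = (\<lambda>\<omega>. \<lambda>i\<in>{..1::nat}. if i < 1 then \<xi> t \<omega> else \<xi> T \<omega>)"
  have X: "X \<in> M \<rightarrow>\<^sub>M PiM {..1} (\<lambda>_. lborel)"
    unfolding X_def by measurable
  have "distr M (PiM {..1} (\<lambda>_. lborel)) X = density (PiM {..1} (\<lambda>_. lborel))
      (\<lambda>x. ennreal (IG_dens c \<gamma> t (x 0)) * ennreal (IG_dens c \<gamma> (T - t) (x 1 - x 0)))"
    using stable_half_random_bridge_GIG_distr[OF c \<gamma> T bridge, of 1 "\<lambda>_. t"]
      GIG_IG_ratio_eq_1[OF c \<gamma> T bridge] t c
    by (simp add: X_def increment_def ennreal_mult'' IG_dens_nonneg)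
  from emeasure_one_step_density[where g = "\<lambda>a. ennreal (IG_dens c \<gamma> t a)"
      and h = "\<lambda>a z. ennreal (IG_dens c \<gamma> (T - t) (z - a))", OF X this]
  have law: "emeasure M {\<omega>\<in>space M. \<xi> t \<omega> \<in> B}
      = (\<integral>\<^sup>+y. indicator B y * ennreal (IG_dens c \<gamma> t (y - 0)) \<partial>lborel)"
    using nn_integral_IG_dens[OF c \<gamma>] t by (simp add: X_def mult.commute)
  have "emeasure M {\<omega>\<in>space M. \<xi> 0 \<omega> \<in> A \<and> \<xi> t \<omega> \<in> B}
      = emeasure M {\<omega>\<in>space M. 0 \<in> A \<and> \<xi> t \<omega> \<in> B}"
    by (rule emeasure_eq_AE) (use origin in auto)
  also have "\<dots> = indicator A 0 * emeasure M {\<omega>\<in>space M. \<xi> t \<omega> \<in> B}"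
    by (cases "0 \<in> A") auto
  also have "\<dots> = (\<integral>\<^sup>+\<omega>. indicator A (\<xi> 0 \<omega>)
      * (\<integral>\<^sup>+y. indicator B y * ennreal (IG_dens c \<gamma> t (y - \<xi> 0 \<omega>)) \<partial>lborel) \<partial>M)"
    unfolding law using origin
    by (subst nn_integral_cong_AE[where v = "\<lambda>_. indicator A 0
        * (\<integral>\<^sup>+y. indicator B y * ennreal (IG_dens c \<gamma> t (y - 0)) \<partial>lborel)"])
       (auto simp: emeasure_space_1)
  finally show ?thesis .
qed

lemma ennreal_set_integral_IG_dens:
  assumes c: "c > 0" and \<gamma>: "\<gamma> > 0" and u: "u > 0" and [measurable]: "B \<in> sets borel"
  shows "ennreal (LINT y:B|lborel. IG_dens c \<gamma> u (y - x))
    = (\<integral>\<^sup>+y. indicator B y * ennreal (IG_dens c \<gamma> u (y - x)) \<partial>lborel)"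
proof -
  have nonneg: "0 \<le> IG_dens c \<gamma> u y" for y
    using c u by (simp add: IG_dens_nonneg)
  have "(\<integral>\<^sup>+y. ennreal (indicator B y * IG_dens c \<gamma> u (y - x)) \<partial>lborel)
      \<le> (\<integral>\<^sup>+y. ennreal (IG_dens c \<gamma> u (y - x)) \<partial>lborel)"
    by (intro nn_integral_mono) (simp add: indicator_def)
  also have "\<dots> < \<top>"
    using nn_integral_IG_dens[OF c \<gamma> u] by simp
  finally have "integrable lborel (\<lambda>y. indicator B y * IG_dens c \<gamma> u (y - x))"
    using nonneg by (intro integrableI_nonneg) auto
  then have "ennreal (LINT y:B|lborel. IG_dens c \<gamma> u (y - x))
      = (\<integral>\<^sup>+y. ennreal (indicator B y * IG_dens c \<gamma> u (y - x)) \<partial>lborel)"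
    unfolding set_lebesgue_integral_def using nonneg by (simp add: nn_integral_eq_integral)
  also have "\<dots> = (\<integral>\<^sup>+y. indicator B y * ennreal (IG_dens c \<gamma> u (y - x)) \<partial>lborel)"
    by (intro nn_integral_cong) (simp add: indicator_def)
  finally show ?thesis .
qed

theorem mainTheorem4:
  fixes M :: "'a measure" and \<xi> :: "real \<Rightarrow> 'a \<Rightarrow> real" and c \<gamma> T s t :: real
  assumes "c > 0" and "\<gamma> > 0" and "T > 0"
    and "stable_half_random_bridge M c T (\<lambda>z. f_GIG z (-1/2) (c * T) \<gamma>) \<xi>"
    and "0 \<le> s" and "s < t" and "t < T"
  shows "\<forall>A\<in>sets borel. \<forall>B\<in>sets borel.
           measure M {\<omega>\<in>space M. \<xi> s \<omega> \<in> A \<and> \<xi> t \<omega> \<in> B}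
             = (\<integral>\<omega>. indicator A (\<xi> s \<omega>)
                   * (LINT y:B|lborel. IG_dens c \<gamma> (t - s) (y - \<xi> s \<omega>)) \<partial>M)"
proof (intro ballI)
  fix A B :: "real set"
  assume [measurable]: "A \<in> sets borel" "B \<in> sets borel"
  have [measurable]: "\<xi> s \<in> borel_measurable M"
    using stable_half_random_bridge_measurable[OF assms(4)] assms(5-7) by simp
  have "emeasure M {\<omega>\<in>space M. \<xi> s \<omega> \<in> A \<and> \<xi> t \<omega> \<in> B}
      = (\<integral>\<^sup>+\<omega>. indicator A (\<xi> s \<omega>)
          * (\<integral>\<^sup>+y. indicator B y * ennreal (IG_dens c \<gamma> (t - s) (y - \<xi> s \<omega>)) \<partial>lborel) \<partial>M)"
    using emeasure_GIG_bridge_from_origin[OF assms(1,2,4)] emeasure_GIG_bridge_two_times[OF assms(1,2,4)]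
      assms(5-7) by (cases "s = 0") simp_all
  also have "\<dots> = (\<integral>\<^sup>+\<omega>. ennreal (indicator A (\<xi> s \<omega>)
      * (LINT y:B|lborel. IG_dens c \<gamma> (t - s) (y - \<xi> s \<omega>))) \<partial>M)"
    using ennreal_set_integral_IG_dens[OF assms(1,2)] assms(6)
    by (intro nn_integral_cong) (simp add: indicator_def)
  finally show "measure M {\<omega>\<in>space M. \<xi> s \<omega> \<in> A \<and> \<xi> t \<omega> \<in> B}
      = (\<integral>\<omega>. indicator A (\<xi> s \<omega>) * (LINT y:B|lborel. IG_dens c \<gamma> (t - s) (y - \<xi> s \<omega>)) \<partial>M)"
    using assms(1,6)
    by (subst integral_eq_nn_integral) (auto simp: measure_def set_lebesgue_integral_def IG_dens_nonneg)
qed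

end
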